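(* There are infinitely many (pairwise non-isomorphic) finite simple graphs $G$ such that $G$ is 2-connected, cubic, and bipartite, $v(G) \equiv 0 \pmod 6$, and $G$ has no $\Lambda$-factor.
   Context: Graphs are finite, undirected, without loops or multiple edges; $v(G)=|V(G)|$. $\Lambda$ denotes the path on 3 vertices. A $\Lambda$-factor of $G$ is a spanning subgraph of $G$ each of whose connected components is a 3-vertex path. *)

theory Defs
  imports Main
begin

definition simple_graph :: "'a set \<Rightarrow> ('a \<Rightarrow> 'a \<Rightarrow> bool) \<Rightarrow> bool" where
  "simple_graph V E \<longleftrightarrow> finite V \<and> (\<forall>x y. E x y \<longrightarrow> x \<in> V \<and> y \<in> V)
     \<and> (\<forall>x y. E x y \<longrightarrow> E y x) \<and> (\<forall>x. \<not> E x x)"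

definition neighbours :: "('a \<Rightarrow> 'a \<Rightarrow> bool) \<Rightarrow> 'a \<Rightarrow> 'a set" where
  "neighbours E x = {y. E x y}"

definition cubic :: "'a set \<Rightarrow> ('a \<Rightarrow> 'a \<Rightarrow> bool) \<Rightarrow> bool" where
  "cubic V E \<longleftrightarrow> (\<forall>x\<in>V. card (neighbours E x) = 3)"

definition bipartite :: "'a set \<Rightarrow> ('a \<Rightarrow> 'a \<Rightarrow> bool) \<Rightarrow> bool" where
  "bipartite V E \<longleftrightarrow> (\<exists>A. A \<subseteq> V \<and>
     (\<forall>x y. E x y \<longrightarrow> (x \<in> A \<longleftrightarrow> y \<notin> A)))"

definition connected_graph :: "'a set \<Rightarrow> ('a \<Rightarrow> 'a \<Rightarrow> bool) \<Rightarrow> bool" where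
  "connected_graph V E \<longleftrightarrow> V \<noteq> {} \<and>
     (\<forall>x\<in>V. \<forall>y\<in>V. (\<lambda>u v. u \<in> V \<and> v \<in> V \<and> E u v)\<^sup>*\<^sup>* x y)"

definition two_connected :: "'a set \<Rightarrow> ('a \<Rightarrow> 'a \<Rightarrow> bool) \<Rightarrow> bool" where
  "two_connected V E \<longleftrightarrow> card V > 2 \<and> connected_graph V E \<and>
     (\<forall>x\<in>V. connected_graph (V - {x}) E)"

definition is_P3 :: "'a set \<Rightarrow> ('a \<Rightarrow> 'a \<Rightarrow> bool) \<Rightarrow> bool" where
  "is_P3 C F \<longleftrightarrow> (\<exists>a b c. a \<noteq> b \<and> b \<noteq> c \<and> a \<noteq> c \<and> C = {a, b, c}
     \<and> F a b \<and> F b c \<and> \<not> F a c)"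

definition Lambda_factor :: "'a set \<Rightarrow> ('a \<Rightarrow> 'a \<Rightarrow> bool) \<Rightarrow> ('a \<Rightarrow> 'a \<Rightarrow> bool) \<Rightarrow> bool" where
  "Lambda_factor V E F \<longleftrightarrow> simple_graph V F \<and> (\<forall>x y. F x y \<longrightarrow> E x y) \<and>
     (\<forall>x\<in>V. is_P3 {y. F\<^sup>*\<^sup>* x y} F)"

definition has_Lambda_factor :: "'a set \<Rightarrow> ('a \<Rightarrow> 'a \<Rightarrow> bool) \<Rightarrow> bool" where
  "has_Lambda_factor V E \<longleftrightarrow> (\<exists>F. Lambda_factor V E F)"

definition graph_iso :: "'a set \<Rightarrow> ('a \<Rightarrow> 'a \<Rightarrow> bool) \<Rightarrow> 'b set \<Rightarrow> ('b \<Rightarrow> 'b \<Rightarrow> bool) \<Rightarrow> bool" where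
  "graph_iso V1 E1 V2 E2 \<longleftrightarrow> (\<exists>f. bij_betw f V1 V2 \<and>
     (\<forall>x\<in>V1. \<forall>y\<in>V1. E1 x y \<longleftrightarrow> E2 (f x) (f y)))"

end

theory Submission
  imports Defs
begin

text \<open>The graphs are rings of \<open>N \<ge> 2\<close> blocks of 26 vertices. Each block has two hubs joined
by two gadgets, a gadget being the 3-cube minus an edge (8 vertices) hung on the ends of the
missing edge; a third gadget joins the second hub to the first hub of the next block.
In a \<open>\<Lambda>\<close>-factor, the part of a gadget avoided by the paths through its two attachment
vertices is a union of paths, so these two paths cover at least \<open>2 \<equiv> 8 (mod 3)\<close> of its
vertices. A path covers at most two vertices besides a given one, and the hubs are at distance
3, so the paths through two hubs of a block are used up by the two parallel gadgets between
them. Hence the gadget joining consecutive blocks is missed by both of its attachment paths,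
a contradiction. Taking \<open>N = 3(i + 1)\<close> makes the order divisible by 6.\<close>

section \<open>Components of a \<open>\<Lambda>\<close>-factor\<close>

definition component :: "('a \<Rightarrow> 'a \<Rightarrow> bool) \<Rightarrow> 'a \<Rightarrow> 'a set" where
  "component F x = {y. F\<^sup>*\<^sup>* x y}"

lemma component_self: "x \<in> component F x"
  by (simp add: component_def)

lemma component_eq:
  assumes "symp F" "y \<in> component F x"
  shows "component F y = component F x"
proof -
  have "F\<^sup>*\<^sup>* x y" "F\<^sup>*\<^sup>* y x"
    using assms sympD[OF symp_rtranclp[OF assms(1)]] by (auto simp: component_def)
  then show ?thesis
    unfolding component_def by (blast intro: rtranclp_trans)
qed

lemma components_disjoint:
  assumes "symp F" "component F x \<noteq> component F y"
  shows "component F x \<inter> component F y = {}"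
  using component_eq[OF assms(1)] assms(2) by blast

lemma component_edge_iff:
  assumes "symp F" "F a b"
  shows "a \<in> component F x \<longleftrightarrow> b \<in> component F x"
  using assms sympD[OF assms(1)] unfolding component_def
  by (blast intro: rtranclp.rtrancl_into_rtrancl)

lemma component_subset_if_closed:
  assumes "\<forall>a\<in>Y. \<forall>b. F a b \<longrightarrow> b \<in> Y" "x \<in> Y"
  shows "component F x \<subseteq> Y"
proof
  fix y
  assume "y \<in> component F x"
  then have "F\<^sup>*\<^sup>* x y"
    by (simp add: component_def)
  then show "y \<in> Y"
    by (induction rule: rtranclp_induct) (use assms in auto)
qed

lemma Lambda_factor_finite: "Lambda_factor V E F \<Longrightarrow> finite V"
  by (simp add: Lambda_factor_def simple_graph_def)

lemma Lambda_factor_edge: "Lambda_factor V E F \<Longrightarrow> F a b \<Longrightarrow> E a b"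
  by (simp add: Lambda_factor_def)

lemma Lambda_factor_symp: "Lambda_factor V E F \<Longrightarrow> symp F"
  by (auto simp: Lambda_factor_def simple_graph_def intro: sympI)

lemma Lambda_factor_component_P3:
  "Lambda_factor V E F \<Longrightarrow> x \<in> V \<Longrightarrow> is_P3 (component F x) F"
  by (simp add: Lambda_factor_def component_def)

lemma card_component:
  assumes "Lambda_factor V E F" "x \<in> V"
  shows "card (component F x) = 3"
  using Lambda_factor_component_P3[OF assms] unfolding is_P3_def by auto

lemma finite_component:
  assumes "Lambda_factor V E F" "x \<in> V"
  shows "finite (component F x)"
  by (intro card_ge_0_finite) (simp add: card_component[OF assms])

lemma three_dvd_card_if_closed:
  assumes LF: "Lambda_factor V E F" and "Y \<subseteq> V" and closed: "\<forall>a\<in>Y. \<forall>b. F a b \<longrightarrow> b \<in> Y"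
  shows "3 dvd card Y"
proof -
  have fin: "finite Y"
    using Lambda_factor_finite[OF LF] \<open>Y \<subseteq> V\<close> finite_subset by blast
  have Y: "\<Union> (component F ` Y) = Y"
  proof
    show "\<Union> (component F ` Y) \<subseteq> Y"
      using component_subset_if_closed[OF closed] by blast
    show "Y \<subseteq> \<Union> (component F ` Y)"
      using component_self by fast
  qed
  have "3 * card (component F ` Y) = card (\<Union> (component F ` Y))"
  proof (rule card_partition)
    show "finite (component F ` Y)" "finite (\<Union> (component F ` Y))"
      using fin Y by simp_all
    show "\<And>c. c \<in> component F ` Y \<Longrightarrow> card c = 3"
      using card_component[OF LF] \<open>Y \<subseteq> V\<close> by blast
    show "\<And>c1 c2. c1 \<in> component F ` Y \<Longrightarrow> c2 \<in> component F ` Y \<Longrightarrow> c1 \<noteq> c2 \<Longrightarrow> c1 \<inter> c2 = {}"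
      using components_disjoint[OF Lambda_factor_symp[OF LF]] by blast
  qed
  then show ?thesis
    unfolding Y by (metis dvd_triv_left)
qed

lemma card_component_Int_le_2:
  assumes "Lambda_factor V E F" "u \<in> V" "u \<notin> X"
  shows "card (component F u \<inter> X) \<le> 2"
proof -
  have "component F u \<inter> X \<subseteq> component F u - {u}"
    using \<open>u \<notin> X\<close> by blast
  moreover have "card (component F u - {u}) = 2"
    using card_component[OF assms(1,2)] component_self[of u F] by simp
  ultimately show ?thesis
    using finite_component[OF assms(1,2)] by (metis card_mono finite_Diff)
qed

definition far :: "('a \<Rightarrow> 'a \<Rightarrow> bool) \<Rightarrow> 'a \<Rightarrow> 'a \<Rightarrow> bool" where
  "far E u v \<longleftrightarrow> u \<noteq> v \<and> \<not> E u v \<and> \<not> (\<exists>w. E u w \<and> E w v)"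

lemma far_if_disjoint_neighbours:
  assumes "symp E" "u \<noteq> v" "v \<notin> neighbours E u" "neighbours E u \<inter> neighbours E v = {}"
  shows "far E u v"
  using assms sympD[OF assms(1)] unfolding far_def neighbours_def by blast

lemma components_differ_if_far:
  assumes LF: "Lambda_factor V E F" and "u \<in> V" "far E u v"
  shows "component F u \<noteq> component F v"
proof
  assume eq: "component F u = component F v"
  obtain a b c where abc: "component F u = {a, b, c}" "F a b" "F b c"
    using Lambda_factor_component_P3[OF LF \<open>u \<in> V\<close>] unfolding is_P3_def by blast
  have "E a b" "E b c" "E b a" "E c b"
    using abc sympD[OF Lambda_factor_symp[OF LF]] Lambda_factor_edge[OF LF] by blast+
  moreover have "u \<in> {a, b, c}" "v \<in> {a, b, c}"
    using component_self[of u F] component_self[of v F] abc(1) eq by simp_all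
  ultimately show False
    using \<open>far E u v\<close> unfolding far_def by blast
qed

section \<open>Gadgets\<close>

definition attached :: "('a \<Rightarrow> 'a \<Rightarrow> bool) \<Rightarrow> 'a set \<Rightarrow> 'a set \<Rightarrow> bool" where
  "attached E X Y \<longleftrightarrow> X \<inter> Y = {} \<and> (\<forall>a\<in>X. neighbours E a \<subseteq> X \<union> Y)"

definition gadget :: "('a \<Rightarrow> 'a \<Rightarrow> bool) \<Rightarrow> 'a set \<Rightarrow> 'a \<Rightarrow> 'a \<Rightarrow> bool" where
  "gadget E X u v \<longleftrightarrow> attached E X {u, v} \<and> card X mod 3 = 2"

lemma gadget_commute: "gadget E X u v \<longleftrightarrow> gadget E X v u"
  by (simp add: gadget_def insert_commute)

lemma card_component_traces_mod_3:
  assumes LF: "Lambda_factor V E F" and "X \<subseteq> V" "attached E X {y1, y2}"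
    and "component F y1 \<noteq> component F y2"
  shows "(card (component F y1 \<inter> X) + card (component F y2 \<inter> X)) mod 3 = card X mod 3"
proof -
  let ?C1 = "component F y1" and ?C2 = "component F y2"
  have symp: "symp F"
    using Lambda_factor_symp[OF LF] .
  have "\<forall>a\<in>X - ?C1 - ?C2. \<forall>b. F a b \<longrightarrow> b \<in> X - ?C1 - ?C2"
  proof (intro ballI allI impI)
    fix a b
    assume a: "a \<in> X - ?C1 - ?C2" and "F a b"
    then have "b \<notin> ?C1" "b \<notin> ?C2"
      using component_edge_iff[OF symp \<open>F a b\<close>] by blast+
    moreover have "b \<in> X \<union> {y1, y2}"
      using \<open>attached E X {y1, y2}\<close> a Lambda_factor_edge[OF LF \<open>F a b\<close>]
      unfolding attached_def neighbours_def by blast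
    ultimately show "b \<in> X - ?C1 - ?C2"
      using component_self[of y1 F] component_self[of y2 F] by blast
  qed
  then have "3 dvd card (X - ?C1 - ?C2)"
    using three_dvd_card_if_closed[OF LF, of "X - ?C1 - ?C2"] \<open>X \<subseteq> V\<close> by blast
  moreover have "card X = card (?C1 \<inter> X) + card (?C2 \<inter> X) + card (X - ?C1 - ?C2)"
  proof -
    have fin: "finite X"
      using Lambda_factor_finite[OF LF] \<open>X \<subseteq> V\<close> finite_subset by blast
    have "(X - ?C1) \<inter> ?C2 = ?C2 \<inter> X"
      using components_disjoint[OF symp \<open>?C1 \<noteq> ?C2\<close>] by blast
    then show ?thesis
      using card_Int_Diff[OF fin, of ?C1] card_Int_Diff[of "X - ?C1" ?C2] fin
      by (simp add: Int_commute Diff_Int_distrib2)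
  qed
  ultimately show ?thesis
    by (auto elim!: dvdE)
qed

lemma card_Int_Un_disjoint:
  assumes "finite C" "A \<inter> B = {}"
  shows "card (C \<inter> (A \<union> B)) = card (C \<inter> A) + card (C \<inter> B)"
  using assms by (simp add: Int_Un_distrib card_Un_disjoint disjoint_iff)

lemma component_confined_by_two_gadgets:
  assumes LF: "Lambda_factor V E F" and "u \<in> V" "v \<in> V" "component F u \<noteq> component F v"
    and "P \<union> Q \<subseteq> V" "gadget E P u v" "gadget E Q u v"
    and "P \<inter> Q = {}" "R \<inter> (P \<union> Q) = {}" "v \<notin> R"
  shows "component F v \<inter> R = {}"
proof -
  let ?Cu = "component F u" and ?Cv = "component F v"
  have "2 \<le> card (?Cu \<inter> P) + card (?Cv \<inter> P)" "2 \<le> card (?Cu \<inter> Q) + card (?Cv \<inter> Q)"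
    using card_component_traces_mod_3[OF LF] assms unfolding gadget_def
    by (metis le_sup_iff mod_less_eq_dividend)+
  moreover have "u \<notin> P \<union> Q" "v \<notin> P \<union> Q \<union> R"
    using assms unfolding gadget_def attached_def by blast+
  then have "card (?Cu \<inter> (P \<union> Q)) \<le> 2" "card (?Cv \<inter> (P \<union> Q \<union> R)) \<le> 2"
    using card_component_Int_le_2[OF LF] assms by simp_all
  moreover have "(P \<union> Q) \<inter> R = {}"
    using \<open>R \<inter> (P \<union> Q) = {}\<close> by blast
  ultimately have "card (?Cv \<inter> R) = 0"
    using \<open>P \<inter> Q = {}\<close> finite_component[OF LF] \<open>u \<in> V\<close> \<open>v \<in> V\<close>
    by (simp add: card_Int_Un_disjoint del: card_0_eq)
  then show ?thesis
    using finite_component[OF LF \<open>v \<in> V\<close>] by simp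
qed

lemma no_Lambda_factor_if_gadget_chain:
  assumes "{a, b, c, d} \<subseteq> V" "far E a b" "far E b c" "far E c d"
    and "P \<union> Q \<union> R \<union> P' \<union> Q' \<subseteq> V"
    and "gadget E P a b" "gadget E Q a b" "gadget E R b c" "gadget E P' c d" "gadget E Q' c d"
    and "P \<inter> Q = {}" "R \<inter> (P \<union> Q) = {}" "P' \<inter> Q' = {}" "R \<inter> (P' \<union> Q') = {}"
  shows "\<not> has_Lambda_factor V E"
proof
  assume "has_Lambda_factor V E"
  then obtain F where LF: "Lambda_factor V E F"
    by (auto simp: has_Lambda_factor_def)
  have "a \<in> V" "b \<in> V" "c \<in> V" "d \<in> V"
    using assms(1) by simp_all
  have ab: "component F a \<noteq> component F b"
    using components_differ_if_far[OF LF \<open>a \<in> V\<close> \<open>far E a b\<close>] .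
  have bc: "component F b \<noteq> component F c"
    using components_differ_if_far[OF LF \<open>b \<in> V\<close> \<open>far E b c\<close>] .
  have dc: "component F d \<noteq> component F c"
    using components_differ_if_far[OF LF \<open>c \<in> V\<close> \<open>far E c d\<close>] by (rule not_sym)
  have R: "attached E R {b, c}" "card R mod 3 = 2"
    using \<open>gadget E R b c\<close> by (simp_all add: gadget_def)
  then have "b \<notin> R" "c \<notin> R"
    unfolding attached_def by blast+
  have "component F b \<inter> R = {}"
  proof (rule component_confined_by_two_gadgets[OF LF \<open>a \<in> V\<close> \<open>b \<in> V\<close> ab])
    show "P \<union> Q \<subseteq> V"
      using assms(5) by blast
  qed (use assms \<open>b \<notin> R\<close> in simp_all)
  moreover have "component F c \<inter> R = {}"
  proof (rule component_confined_by_two_gadgets[OF LF \<open>d \<in> V\<close> \<open>c \<in> V\<close> dc])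
    show "P' \<union> Q' \<subseteq> V"
      using assms(5) by blast
    show "gadget E P' d c" "gadget E Q' d c"
      using \<open>gadget E P' c d\<close> \<open>gadget E Q' c d\<close> by (simp_all only: gadget_commute[of E _ c d])
  qed (use assms \<open>c \<notin> R\<close> in simp_all)
  ultimately show False
    using card_component_traces_mod_3[OF LF _ R(1) bc] assms(5) R(2) by simp
qed

definition induced_edges :: "('a \<Rightarrow> 'a \<Rightarrow> bool) \<Rightarrow> 'a set \<Rightarrow> 'a \<Rightarrow> 'a \<Rightarrow> bool" where
  "induced_edges E S u v \<longleftrightarrow> u \<in> S \<and> v \<in> S \<and> E u v"

lemma connected_graph_iff:
  "connected_graph S E \<longleftrightarrow> S \<noteq> {} \<and> (\<forall>x\<in>S. \<forall>y\<in>S. (induced_edges E S)\<^sup>*\<^sup>* x y)"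
  by (simp add: connected_graph_def induced_edges_def[abs_def])

lemma symp_induced_edges: "symp E \<Longrightarrow> symp (induced_edges E S)"
  by (auto simp: induced_edges_def intro!: sympI dest: sympD)

lemma induced_edges_reach_mono:
  "S \<subseteq> T \<Longrightarrow> (induced_edges E S)\<^sup>*\<^sup>* u v \<Longrightarrow> (induced_edges E T)\<^sup>*\<^sup>* u v"
  by (erule rtranclp_mono[THEN predicate2D, rotated]) (auto simp: induced_edges_def)

lemma induced_edges_reach_in: "(induced_edges E S)\<^sup>*\<^sup>* u v \<Longrightarrow> u \<in> S \<Longrightarrow> v \<in> S"
  by (induction rule: rtranclp_induct) (auto simp: induced_edges_def)

lemma connected_graph_if_reach_hub:
  assumes "symp E" "t \<in> S" "\<forall>w\<in>S. (induced_edges E S)\<^sup>*\<^sup>* w t"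
  shows "connected_graph S E"
  unfolding connected_graph_iff
proof (intro conjI ballI)
  show "S \<noteq> {}"
    using \<open>t \<in> S\<close> by blast
  fix x y
  assume "x \<in> S" "y \<in> S"
  then have "(induced_edges E S)\<^sup>*\<^sup>* x t" "(induced_edges E S)\<^sup>*\<^sup>* y t"
    using assms(3) by blast+
  then show "(induced_edges E S)\<^sup>*\<^sup>* x y"
    using sympD[OF symp_rtranclp[OF symp_induced_edges[OF assms(1)]]] rtranclp_trans by metis
qed

lemma two_connected_if_vertex_deletions_connected:
  assumes "finite V" "2 < card V" "\<forall>x\<in>V. connected_graph (V - {x}) E"
  shows "two_connected V E"
  unfolding two_connected_def
proof (intro conjI)
  show "connected_graph V E"
    unfolding connected_graph_iff
  proof (intro conjI ballI)
    show "V \<noteq> {}"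
      using assms(2) by auto
    fix u v
    assume "u \<in> V" "v \<in> V"
    have "card {u, v} \<le> 2"
      by (simp add: card_insert_if)
    then have "\<not> V \<subseteq> {u, v}"
      using assms(2) card_mono[of "{u, v}" V] by auto
    then obtain z where "z \<in> V" "z \<noteq> u" "z \<noteq> v"
      by blast
    show "(induced_edges E V)\<^sup>*\<^sup>* u v"
    proof (cases "u = v")
      case False
      then have "(induced_edges E (V - {v}))\<^sup>*\<^sup>* u z" "(induced_edges E (V - {u}))\<^sup>*\<^sup>* z v"
        using assms(3) \<open>u \<in> V\<close> \<open>v \<in> V\<close> \<open>z \<in> V\<close> \<open>z \<noteq> u\<close> \<open>z \<noteq> v\<close>
        unfolding connected_graph_iff by blast+
      then show ?thesis
        using induced_edges_reach_mono[of _ V E] rtranclp_trans by (metis Diff_subset)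
    qed simp
  qed
qed (use assms in auto)

lemma graph_iso_card: "graph_iso V1 E1 V2 E2 \<Longrightarrow> card V1 = card V2"
  unfolding graph_iso_def using bij_betw_same_card by blast

section \<open>The ring of blocks\<close>

text \<open>Vertex \<open>26 * i + j\<close> of the ring is vertex \<open>j\<close> of block \<open>i\<close>. In a block, 0 and 1 are
  the hubs, and 2--9, 10--17, 18--25 are copies of the 3-cube whose edge between the first two
  vertices is missing: the first two copies hang between the hubs, the third between hub 1 and,
  through vertex 18, hub 0 of the next block.\<close>

definition block_nbrs :: "nat \<Rightarrow> nat list" where
  "block_nbrs j = [[2, 10], [3, 11, 19], [0, 4, 6], [1, 5, 7], [5, 2, 8], [4, 3, 9], [7, 8, 2],
    [6, 9, 3], [9, 6, 4], [8, 7, 5], [0, 12, 14], [1, 13, 15], [13, 10, 16], [12, 11, 17],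
    [15, 16, 10], [14, 17, 11], [17, 14, 12], [16, 15, 13], [20, 22], [1, 21, 23], [21, 18, 24],
    [20, 19, 25], [23, 24, 18], [22, 25, 19], [25, 22, 20], [24, 23, 21]] ! j"

definition block_side :: "nat set" where
  "block_side = {0, 3, 4, 6, 9, 11, 12, 14, 17, 19, 20, 22, 25}"

definition ring_vertices :: "nat \<Rightarrow> nat set" where
  "ring_vertices N = {..<26 * N}"

definition ring_edges :: "nat \<Rightarrow> nat \<Rightarrow> nat \<Rightarrow> bool" where
  "ring_edges N a b \<longleftrightarrow> a < 26 * N \<and> b < 26 * N \<and>
     (a div 26 = b div 26 \<and> b mod 26 \<in> set (block_nbrs (a mod 26))
      \<or> a mod 26 = 18 \<and> b mod 26 = 0 \<and> b div 26 = Suc (a div 26) mod N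
      \<or> a mod 26 = 0 \<and> b mod 26 = 18 \<and> a div 26 = Suc (b div 26) mod N)"

lemma block_nbrs_facts:
  "\<forall>j<26. (\<forall>k\<in>set (block_nbrs j). k < 26 \<and> j \<in> set (block_nbrs k) \<and> k \<noteq> j
      \<and> (j \<in> block_side \<longleftrightarrow> k \<notin> block_side))
    \<and> distinct (block_nbrs j) \<and> length (block_nbrs j) = (if j = 0 \<or> j = 18 then 2 else 3)"
  unfolding block_side_def by code_simp

lemma block_nbrs_sym:
  "j < 26 \<Longrightarrow> k \<in> set (block_nbrs j) \<Longrightarrow> k < 26 \<and> j \<in> set (block_nbrs k) \<and> k \<noteq> j"
  using block_nbrs_facts by blast

lemma block_nbrs_side:
  "j < 26 \<Longrightarrow> k \<in> set (block_nbrs j) \<Longrightarrow> j \<in> block_side \<longleftrightarrow> k \<notin> block_side"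
  using block_nbrs_facts by blast

lemma div_26_less: "(a::nat) < 26 * N \<Longrightarrow> a div 26 < N"
  by (simp add: less_mult_imp_div_less mult.commute)

lemma ring_edges_sym: "ring_edges N a b \<Longrightarrow> ring_edges N b a"
  unfolding ring_edges_def using block_nbrs_sym[of "a mod 26" "b mod 26"] by auto

lemma symp_ring_edges: "symp (ring_edges N)"
  using ring_edges_sym by (blast intro: sympI)

lemma ring_edges_irrefl: "\<not> ring_edges N a a"
  unfolding ring_edges_def using block_nbrs_sym[of "a mod 26" "a mod 26"] by auto

lemma simple_graph_ring: "simple_graph (ring_vertices N) (ring_edges N)"
  unfolding simple_graph_def using ring_edges_sym ring_edges_irrefl
  by (auto simp: ring_edges_def ring_vertices_def)

lemma bipartite_ring: "bipartite (ring_vertices N) (ring_edges N)"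
  unfolding bipartite_def
proof (intro exI conjI allI impI)
  show "{a \<in> ring_vertices N. a mod 26 \<in> block_side} \<subseteq> ring_vertices N"
    by blast
  fix x y
  assume "ring_edges N x y"
  moreover have "0 \<in> block_side" "18 \<notin> block_side"
    by (simp_all add: block_side_def)
  ultimately have "x mod 26 \<in> block_side \<longleftrightarrow> y mod 26 \<notin> block_side"
    using block_nbrs_side[of "x mod 26" "y mod 26"] unfolding ring_edges_def by auto
  then show "x \<in> {a \<in> ring_vertices N. a mod 26 \<in> block_side}
      \<longleftrightarrow> y \<notin> {a \<in> ring_vertices N. a mod 26 \<in> block_side}"
    using \<open>ring_edges N x y\<close> by (auto simp: ring_edges_def ring_vertices_def)
qed

lemma Suc_pred_mod:
  assumes "(i::nat) < N"
  shows "Suc ((i + N - 1) mod N) mod N = i"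
proof -
  have "Suc ((i + N - 1) mod N) mod N = Suc (i + N - 1) mod N"
    by (simp add: mod_Suc_eq)
  also have "Suc (i + N - 1) = i + N"
    using assms by simp
  finally show ?thesis
    using assms by simp
qed

lemma pred_Suc_mod:
  assumes "(d::nat) < N"
  shows "(Suc d mod N + N - 1) mod N = d"
proof (cases "Suc d < N")
  case False
  then have "Suc d = N"
    using assms by simp
  then show ?thesis
    by simp
qed simp

lemma Suc_add_mod_neq:
  assumes "(k::nat) < N" "d + 1 < N"
  shows "(Suc k + d) mod N \<noteq> k"
proof (cases "Suc k + d < N")
  case False
  then have "(Suc k + d) mod N = Suc k + d - N"
    using assms by (simp add: le_mod_geq)
  then show ?thesis
    using assms False by linarith
qed simp

lemma neighbours_ring_subset:
  "neighbours (ring_edges N) a \<subseteq> (\<lambda>k. 26 * (a div 26) + k) ` set (block_nbrs (a mod 26))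
     \<union> (if a mod 26 = 18 then {26 * (Suc (a div 26) mod N)} else {})
     \<union> (if a mod 26 = 0 then {26 * ((a div 26 + N - 1) mod N) + 18} else {})"
    (is "_ \<subseteq> ?A \<union> ?B \<union> ?C")
proof
  fix y
  assume "y \<in> neighbours (ring_edges N) a"
  then have edge: "ring_edges N a y"
    by (simp add: neighbours_def)
  have y: "y = 26 * (y div 26) + y mod 26"
    by simp
  from edge consider
      (same_block) "a div 26 = y div 26" "y mod 26 \<in> set (block_nbrs (a mod 26))"
    | (succ_block) "a mod 26 = 18" "y mod 26 = 0" "y div 26 = Suc (a div 26) mod N"
    | (pred_block) "a mod 26 = 0" "y mod 26 = 18" "a div 26 = Suc (y div 26) mod N"
    unfolding ring_edges_def by fast
  then show "y \<in> ?A \<union> ?B \<union> ?C"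
  proof cases
    case same_block
    then have "y \<in> ?A"
      using y by (metis image_eqI)
    then show ?thesis
      by blast
  next
    case succ_block
    then show ?thesis
      using y by simp
  next
    case pred_block
    have "y div 26 < N"
      using edge div_26_less unfolding ring_edges_def by blast
    then have "(a div 26 + N - 1) mod N = y div 26"
      using pred_block pred_Suc_mod by simp
    then show ?thesis
      using y pred_block by simp
  qed
qed

lemma neighbours_ring_supset:
  assumes "a < 26 * N"
  shows "(\<lambda>k. 26 * (a div 26) + k) ` set (block_nbrs (a mod 26))
     \<union> (if a mod 26 = 18 then {26 * (Suc (a div 26) mod N)} else {})
     \<union> (if a mod 26 = 0 then {26 * ((a div 26 + N - 1) mod N) + 18} else {})
     \<subseteq> neighbours (ring_edges N) a"
proof
  have i: "a div 26 < N"
    using div_26_less[OF assms] .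
  fix y
  assume "y \<in> (\<lambda>k. 26 * (a div 26) + k) ` set (block_nbrs (a mod 26))
     \<union> (if a mod 26 = 18 then {26 * (Suc (a div 26) mod N)} else {})
     \<union> (if a mod 26 = 0 then {26 * ((a div 26 + N - 1) mod N) + 18} else {})"
  then consider k where "k \<in> set (block_nbrs (a mod 26))" "y = 26 * (a div 26) + k"
    | "a mod 26 = 18" "y = 26 * (Suc (a div 26) mod N)"
    | "a mod 26 = 0" "y = 26 * ((a div 26 + N - 1) mod N) + 18"
    by (auto split: if_splits)
  then show "y \<in> neighbours (ring_edges N) a"
  proof cases
    case (1 k)
    then have "k < 26"
      using block_nbrs_sym[of "a mod 26" k] by simp
    then show ?thesis
      using 1 i unfolding neighbours_def ring_edges_def by auto
  next
    case 2
    then show ?thesis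
      using i unfolding neighbours_def ring_edges_def by auto
  next
    case 3
    have "(a div 26 + N - 1) mod N < N"
      using i by simp
    then have "26 * ((a div 26 + N - 1) mod N) + 18 < 26 * N"
      by linarith
    then show ?thesis
      using 3 i Suc_pred_mod[OF i] unfolding neighbours_def ring_edges_def by auto
  qed
qed

lemma neighbours_ring:
  "a < 26 * N \<Longrightarrow> neighbours (ring_edges N) a = (\<lambda>k. 26 * (a div 26) + k) ` set (block_nbrs (a mod 26))
     \<union> (if a mod 26 = 18 then {26 * (Suc (a div 26) mod N)} else {})
     \<union> (if a mod 26 = 0 then {26 * ((a div 26 + N - 1) mod N) + 18} else {})"
  using neighbours_ring_subset neighbours_ring_supset by (rule subset_antisym)

lemma cubic_ring: "cubic (ring_vertices N) (ring_edges N)"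
  unfolding cubic_def
proof
  fix a
  assume "a \<in> ring_vertices N"
  define i j where "i = a div 26" and "j = a mod 26"
  define p where "p = (i + N - 1) mod N"
  have nbrs: "neighbours (ring_edges N) a = (\<lambda>k. 26 * i + k) ` set (block_nbrs j)
     \<union> (if j = 18 then {26 * (Suc i mod N)} else {}) \<union> (if j = 0 then {26 * p + 18} else {})"
    using \<open>a \<in> ring_vertices N\<close> by (simp add: neighbours_ring ring_vertices_def i_def j_def p_def)
  consider "j = 0" | "j = 18" | "j \<noteq> 0" "j \<noteq> 18"
    by blast
  then show "card (neighbours (ring_edges N) a) = 3"
  proof cases
    case 1
    have "26 * i + 2 \<noteq> 26 * p + 18" "26 * i + 10 \<noteq> 26 * p + 18"
      by presburger+
    then show ?thesis
      using nbrs 1 by (simp add: block_nbrs_def)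
  next
    case 2
    have "26 * m \<noteq> 26 * i + 20" "26 * m \<noteq> 26 * i + 22" for m
      by presburger+
    then show ?thesis
      using nbrs 2 by (simp add: block_nbrs_def)
  next
    case 3
    have "distinct (block_nbrs j)" "length (block_nbrs j) = 3"
      using block_nbrs_facts 3 by (simp_all add: j_def)
    then show ?thesis
      using nbrs 3 by (simp add: card_image distinct_card)
  qed
qed

section \<open>The ring is 2-connected\<close>

fun block_walk :: "nat list \<Rightarrow> bool" where
  "block_walk (a # b # r) \<longleftrightarrow> a < 26 \<and> b \<in> set (block_nbrs a) \<and> block_walk (b # r)"
| "block_walk [a] \<longleftrightarrow> a < 26"
| "block_walk [] \<longleftrightarrow> True"

text \<open>For each \<open>j\<close>, two walks in the block from \<open>j\<close> to a port (0 or 18) that meet only in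
  \<open>j\<close>; deleting a vertex other than \<open>j\<close> leaves one of them intact.\<close>

definition port_path1 :: "nat \<Rightarrow> nat list" where
  "port_path1 j = [[0], [1, 3, 5, 4, 2, 0], [2, 0], [3, 5, 4, 2, 0], [4, 2, 0], [5, 4, 2, 0], [6, 2, 0],
    [7, 6, 2, 0], [8, 6, 2, 0], [9, 8, 6, 2, 0], [10, 0], [11, 13, 12, 10, 0], [12, 10, 0],
    [13, 12, 10, 0], [14, 10, 0], [15, 14, 10, 0], [16, 14, 10, 0], [17, 16, 14, 10, 0], [18],
    [19, 1, 3, 5, 4, 2, 0], [20, 21, 19, 1, 3, 5, 4, 2, 0], [21, 19, 1, 3, 5, 4, 2, 0],
    [22, 23, 19, 1, 3, 5, 4, 2, 0], [23, 19, 1, 3, 5, 4, 2, 0], [24, 25, 23, 19, 1, 3, 5, 4, 2, 0],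
    [25, 23, 19, 1, 3, 5, 4, 2, 0]] ! j"

definition port_path2 :: "nat \<Rightarrow> nat list" where
  "port_path2 j = [[0], [1, 19, 21, 20, 18], [2, 4, 5, 3, 1, 19, 21, 20, 18], [3, 1, 19, 21, 20, 18],
    [4, 5, 3, 1, 19, 21, 20, 18], [5, 3, 1, 19, 21, 20, 18], [6, 7, 3, 1, 19, 21, 20, 18],
    [7, 3, 1, 19, 21, 20, 18], [8, 9, 7, 3, 1, 19, 21, 20, 18], [9, 7, 3, 1, 19, 21, 20, 18],
    [10, 12, 13, 11, 1, 19, 21, 20, 18], [11, 1, 19, 21, 20, 18], [12, 13, 11, 1, 19, 21, 20, 18],
    [13, 11, 1, 19, 21, 20, 18], [14, 15, 11, 1, 19, 21, 20, 18], [15, 11, 1, 19, 21, 20, 18],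
    [16, 17, 15, 11, 1, 19, 21, 20, 18], [17, 15, 11, 1, 19, 21, 20, 18], [18], [19, 21, 20, 18],
    [20, 18], [21, 20, 18], [22, 18], [23, 22, 18], [24, 22, 18], [25, 24, 22, 18]] ! j"

lemma port_paths:
  "\<forall>j<26. block_walk (port_path1 j) \<and> block_walk (port_path2 j)
    \<and> port_path1 j \<noteq> [] \<and> port_path2 j \<noteq> [] \<and> hd (port_path1 j) = j \<and> hd (port_path2 j) = j
    \<and> last (port_path1 j) \<in> {0, 18} \<and> last (port_path2 j) \<in> {0, 18}
    \<and> set (port_path1 j) \<inter> set (port_path2 j) = {j}"
  unfolding port_path1_def port_path2_def by code_simp

lemma block_walk_18_0: "block_walk [18, 20, 21, 19, 1, 3, 5, 4, 2, 0]"
  by code_simp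

abbreviation reach_avoiding :: "nat \<Rightarrow> nat \<Rightarrow> nat \<Rightarrow> nat \<Rightarrow> bool" where
  "reach_avoiding N x \<equiv> (induced_edges (ring_edges N) (ring_vertices N - {x}))\<^sup>*\<^sup>*"

lemma reach_avoiding_sym: "reach_avoiding N x u v \<Longrightarrow> reach_avoiding N x v u"
  using sympD[OF symp_rtranclp[OF symp_induced_edges[OF symp_ring_edges]]] .

lemma reach_avoiding_edge:
  assumes "ring_edges N u v" "u \<noteq> x" "v \<noteq> x"
  shows "reach_avoiding N x u v"
  using assms by (auto simp: induced_edges_def ring_vertices_def ring_edges_def)

lemma block_walk_reach_avoiding:
  "i < N \<Longrightarrow> block_walk ps \<Longrightarrow> ps \<noteq> [] \<Longrightarrow> \<forall>c\<in>set ps. 26 * i + c \<noteq> x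
    \<Longrightarrow> reach_avoiding N x (26 * i + hd ps) (26 * i + last ps)"
proof (induction ps rule: block_walk.induct)
  case (1 a b r)
  have "b < 26"
    using "1.prems"(2) block_nbrs_sym[of a b] by simp
  then have "ring_edges N (26 * i + a) (26 * i + b)"
    using "1.prems" unfolding ring_edges_def by auto
  then have "reach_avoiding N x (26 * i + a) (26 * i + b)"
    using reach_avoiding_edge "1.prems"(4) by simp
  then show ?case
    using "1.IH" "1.prems" by (auto intro: rtranclp_trans)
qed auto

lemma reach_port_avoiding:
  assumes "i < N" "j < 26" "26 * i + j \<noteq> x"
  shows "reach_avoiding N x (26 * i + j) (26 * i) \<or> reach_avoiding N x (26 * i + j) (26 * i + 18)"
proof -
  have paths: "block_walk (port_path1 j)" "block_walk (port_path2 j)"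
    "port_path1 j \<noteq> []" "port_path2 j \<noteq> []" "hd (port_path1 j) = j" "hd (port_path2 j) = j"
    "last (port_path1 j) \<in> {0, 18}" "last (port_path2 j) \<in> {0, 18}"
    "set (port_path1 j) \<inter> set (port_path2 j) = {j}"
    using port_paths \<open>j < 26\<close> by blast+
  have "(\<forall>c\<in>set (port_path1 j). 26 * i + c \<noteq> x) \<or> (\<forall>c\<in>set (port_path2 j). 26 * i + c \<noteq> x)"
  proof (rule ccontr)
    assume "\<not> ?thesis"
    then obtain c where "c \<in> set (port_path1 j)" "c \<in> set (port_path2 j)" "26 * i + c = x"
      by auto
    moreover have "c = j"
      using calculation(1,2) paths(9) by blast
    ultimately show False
      using \<open>26 * i + j \<noteq> x\<close> by simp
  qed
  then show ?thesis
  proof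
    assume "\<forall>c\<in>set (port_path1 j). 26 * i + c \<noteq> x"
    then have "reach_avoiding N x (26 * i + hd (port_path1 j)) (26 * i + last (port_path1 j))"
      using block_walk_reach_avoiding[OF \<open>i < N\<close> paths(1,3)] by blast
    then show ?thesis
      using paths(5,7) by auto
  next
    assume "\<forall>c\<in>set (port_path2 j). 26 * i + c \<noteq> x"
    then have "reach_avoiding N x (26 * i + hd (port_path2 j)) (26 * i + last (port_path2 j))"
      using block_walk_reach_avoiding[OF \<open>i < N\<close> paths(2,4)] by blast
    then show ?thesis
      using paths(6,8) by auto
  qed
qed

lemma reach_entry_in_intact_block:
  assumes "i < N" "x div 26 \<noteq> i" "j < 26"
  shows "reach_avoiding N x (26 * i + j) (26 * i)"
proof -
  have avoid: "26 * i + c \<noteq> x" if "c < 26" for c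
    using assms(2) that by auto
  have "\<forall>c\<in>set [18, 20, 21, 19, 1, 3, 5, 4, 2, 0]. 26 * i + c \<noteq> x"
    by (intro ballI avoid) auto
  then have "reach_avoiding N x (26 * i + 18) (26 * i)"
    using block_walk_reach_avoiding[OF \<open>i < N\<close> block_walk_18_0] by simp
  then show ?thesis
    using reach_port_avoiding[OF assms(1,3) avoid[OF \<open>j < 26\<close>]] by (auto intro: rtranclp_trans)
qed

lemma reach_around_ring:
  assumes "x < 26 * N" "k = x div 26"
  shows "d + 1 < N \<Longrightarrow> reach_avoiding N x (26 * ((Suc k + d) mod N)) (26 * (Suc k mod N))"
proof (induction d)
  case (Suc d)
  define b where "b = (Suc k + d) mod N"
  have "k < N"
    using div_26_less assms by simp
  have "b < N" "b \<noteq> k"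
    using Suc_add_mod_neq[OF \<open>k < N\<close>, of d] Suc.prems by (simp_all add: b_def)
  have next_b: "Suc b mod N = (Suc k + Suc d) mod N"
    by (simp add: b_def mod_Suc_eq)
  then have "Suc b mod N \<noteq> k"
    using Suc_add_mod_neq[OF \<open>k < N\<close>, of "Suc d"] Suc.prems by simp
  then have "reach_avoiding N x (26 * (Suc b mod N)) (26 * b + 18)"
    using reach_avoiding_edge[of N "26 * b + 18" "26 * (Suc b mod N)" x] \<open>b < N\<close> \<open>b \<noteq> k\<close> assms
      reach_avoiding_sym
    by (auto simp: ring_edges_def)
  moreover have "reach_avoiding N x (26 * b + 18) (26 * b)"
    using reach_entry_in_intact_block[OF \<open>b < N\<close>] \<open>b \<noteq> k\<close> assms by simp
  moreover have "reach_avoiding N x (26 * b) (26 * (Suc k mod N))"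
    using Suc by (simp add: b_def)
  ultimately show ?case
    using next_b by (metis rtranclp_trans)
qed simp

lemma reach_from_intact_block:
  assumes "x < 26 * N" "k = x div 26" "i < N" "i \<noteq> k" "j < 26"
  shows "reach_avoiding N x (26 * i + j) (26 * (Suc k mod N))"
proof -
  have "k < N"
    using div_26_less assms by simp
  define d where "d = (if k < i then i - Suc k else i + N - Suc k)"
  have "d + 1 < N" "(Suc k + d) mod N = i"
    using \<open>k < N\<close> assms(3,4) by (auto simp: d_def)
  then have "reach_avoiding N x (26 * i) (26 * (Suc k mod N))"
    using reach_around_ring[OF assms(1,2)] by metis
  moreover have "reach_avoiding N x (26 * i + j) (26 * i)"
    using reach_entry_in_intact_block[OF assms(3) _ assms(5), where x = x] assms(2,4) by simp
  ultimately show ?thesis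
    by (metis rtranclp_trans)
qed

lemma reach_from_damaged_block:
  assumes "2 \<le> N" "x < 26 * N" "k = x div 26" "j < 26" "26 * k + j \<noteq> x"
  shows "reach_avoiding N x (26 * k + j) (26 * (Suc k mod N))"
proof -
  have "k < N"
    using div_26_less assms by simp
  have "Suc k mod N \<noteq> k"
    using Suc_add_mod_neq[OF \<open>k < N\<close>, of 0] assms(1) by simp
  have start: "26 * k + j \<in> ring_vertices N - {x}"
    using \<open>k < N\<close> \<open>j < 26\<close> assms(5) by (simp add: ring_vertices_def)
  from reach_port_avoiding[OF \<open>k < N\<close> \<open>j < 26\<close> \<open>26 * k + j \<noteq> x\<close>]
  show ?thesis
  proof
    assume entry: "reach_avoiding N x (26 * k + j) (26 * k)"
    define p where "p = (k + N - 1) mod N"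
    have "p < N" "Suc p mod N = k"
      using \<open>k < N\<close> Suc_pred_mod[OF \<open>k < N\<close>] by (simp_all add: p_def)
    then have "p \<noteq> k"
      using \<open>Suc k mod N \<noteq> k\<close> by auto
    have "26 * k \<noteq> x"
      using induced_edges_reach_in[OF entry start] by simp
    moreover have "26 * p + 18 \<noteq> x"
      using \<open>p \<noteq> k\<close> assms(3) by auto
    ultimately have "reach_avoiding N x (26 * k) (26 * p + 18)"
      using reach_avoiding_edge \<open>p < N\<close> \<open>k < N\<close> \<open>Suc p mod N = k\<close>
      by (simp add: ring_edges_def)
    moreover have "reach_avoiding N x (26 * p + 18) (26 * (Suc k mod N))"
      using reach_from_intact_block[OF assms(2,3) \<open>p < N\<close> \<open>p \<noteq> k\<close>] by simp
    ultimately show ?thesis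
      using entry by (metis rtranclp_trans)
  next
    assume exit: "reach_avoiding N x (26 * k + j) (26 * k + 18)"
    have "26 * k + 18 \<noteq> x"
      using induced_edges_reach_in[OF exit start] by simp
    moreover have "26 * (Suc k mod N) \<noteq> x"
      using \<open>Suc k mod N \<noteq> k\<close> assms(3) by auto
    ultimately have "reach_avoiding N x (26 * k + 18) (26 * (Suc k mod N))"
      using reach_avoiding_edge \<open>k < N\<close> by (simp add: ring_edges_def)
    then show ?thesis
      using exit by (metis rtranclp_trans)
  qed
qed

lemma reach_hub:
  assumes "2 \<le> N" "x < 26 * N" "w \<in> ring_vertices N - {x}"
  shows "reach_avoiding N x w (26 * (Suc (x div 26) mod N))"
proof -
  define i j where "i = w div 26" and "j = w mod 26"
  have w: "w = 26 * i + j" "j < 26"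
    by (simp_all add: i_def j_def)
  have "i < N"
    using assms(3) div_26_less by (simp add: i_def ring_vertices_def)
  show ?thesis
  proof (cases "i = x div 26")
    case False
    then show ?thesis
      using reach_from_intact_block[OF assms(2) refl \<open>i < N\<close> _ w(2)] w by simp
  next
    case True
    then show ?thesis
      using reach_from_damaged_block[OF assms(1,2) refl w(2)] w assms(3) by simp
  qed
qed

lemma two_connected_ring:
  assumes "2 \<le> N"
  shows "two_connected (ring_vertices N) (ring_edges N)"
proof (rule two_connected_if_vertex_deletions_connected)
  show "finite (ring_vertices N)" "2 < card (ring_vertices N)"
    using assms by (simp_all add: ring_vertices_def)
  show "\<forall>x\<in>ring_vertices N. connected_graph (ring_vertices N - {x}) (ring_edges N)"
  proof
    fix x
    assume "x \<in> ring_vertices N"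
    then have "x < 26 * N"
      by (simp add: ring_vertices_def)
    let ?k = "x div 26"
    have "?k < N"
      using div_26_less[OF \<open>x < 26 * N\<close>] .
    then have "Suc ?k mod N < N" "Suc ?k mod N \<noteq> ?k"
      using Suc_add_mod_neq[of ?k N 0] assms by simp_all
    then have "26 * (Suc ?k mod N) \<in> ring_vertices N - {x}"
      by (auto simp: ring_vertices_def)
    moreover have "\<forall>w\<in>ring_vertices N - {x}. reach_avoiding N x w (26 * (Suc ?k mod N))"
      using reach_hub[OF assms \<open>x < 26 * N\<close>] by blast
    ultimately show "connected_graph (ring_vertices N - {x}) (ring_edges N)"
      by (rule connected_graph_if_reach_hub[OF symp_ring_edges])
  qed
qed

section \<open>The ring has no \<open>\<Lambda>\<close>-factor\<close>

lemma neighbours_first_blocks: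
  assumes "2 \<le> N" "a < 44"
  shows "neighbours (ring_edges N) a = (\<lambda>k. 26 * (a div 26) + k) ` set (block_nbrs (a mod 26))
    \<union> (if a = 18 then {26} else {}) \<union> (if a = 26 then {18} else {}) \<union> (if a = 0 then {26 * N - 8} else {})"
proof -
  have "a < 26 * N"
    using assms by linarith
  moreover have "(N - 1) mod N = N - 1"
    using assms by simp
  ultimately show ?thesis
    using assms neighbours_ring[of a N] by (auto simp: mod_if)
qed

lemma no_Lambda_factor_ring:
  assumes "2 \<le> N"
  shows "\<not> has_Lambda_factor (ring_vertices N) (ring_edges N)"
proof (rule no_Lambda_factor_if_gadget_chain[where a = 0 and b = 1 and c = 26 and d = 27
      and P = "{2, 3, 4, 5, 6, 7, 8, 9}" and Q = "{10, 11, 12, 13, 14, 15, 16, 17}"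
      and R = "{18, 19, 20, 21, 22, 23, 24, 25}"
      and P' = "{28, 29, 30, 31, 32, 33, 34, 35}" and Q' = "{36, 37, 38, 39, 40, 41, 42, 43}"])
  note nbrs = neighbours_first_blocks[OF assms]
  show "far (ring_edges N) 0 1" "far (ring_edges N) 1 26" "far (ring_edges N) 26 27"
    using assms by (auto intro!: far_if_disjoint_neighbours[OF symp_ring_edges]
        simp: nbrs block_nbrs_def)
  show "gadget (ring_edges N) {2, 3, 4, 5, 6, 7, 8, 9} 0 1"
    "gadget (ring_edges N) {10, 11, 12, 13, 14, 15, 16, 17} 0 1"
    "gadget (ring_edges N) {18, 19, 20, 21, 22, 23, 24, 25} 1 26"
    "gadget (ring_edges N) {28, 29, 30, 31, 32, 33, 34, 35} 26 27"
    "gadget (ring_edges N) {36, 37, 38, 39, 40, 41, 42, 43} 26 27"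
    by (simp_all add: gadget_def attached_def nbrs block_nbrs_def)
qed (use assms in \<open>simp_all add: ring_vertices_def\<close>)

theorem mainTheorem2:
  shows "\<exists>(V :: nat \<Rightarrow> nat set) (E :: nat \<Rightarrow> nat \<Rightarrow> nat \<Rightarrow> bool).
    (\<forall>i. simple_graph (V i) (E i) \<and> two_connected (V i) (E i) \<and> cubic (V i) (E i)
         \<and> bipartite (V i) (E i) \<and> card (V i) mod 6 = 0
         \<and> \<not> has_Lambda_factor (V i) (E i))
    \<and> (\<forall>i j. i \<noteq> j \<longrightarrow> \<not> graph_iso (V i) (E i) (V j) (E j))"
proof (intro exI conjI allI impI)
  let ?N = "\<lambda>i::nat. 3 * (i + 1)"
  fix i :: nat
  have "2 \<le> ?N i"
    by simp
  then show "two_connected (ring_vertices (?N i)) (ring_edges (?N i))"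
    "\<not> has_Lambda_factor (ring_vertices (?N i)) (ring_edges (?N i))"
    by (rule two_connected_ring no_Lambda_factor_ring)+
  show "simple_graph (ring_vertices (?N i)) (ring_edges (?N i))"
    "cubic (ring_vertices (?N i)) (ring_edges (?N i))"
    "bipartite (ring_vertices (?N i)) (ring_edges (?N i))"
    by (rule simple_graph_ring cubic_ring bipartite_ring)+
  show "card (ring_vertices (?N i)) mod 6 = 0"
    by (simp add: ring_vertices_def)
next
  fix i j :: nat
  assume "i \<noteq> j"
  then show "\<not> graph_iso (ring_vertices (3 * (i + 1))) (ring_edges (3 * (i + 1)))
      (ring_vertices (3 * (j + 1))) (ring_edges (3 * (j + 1)))"
    using graph_iso_card by (fastforce simp: ring_vertices_def)
qed

end
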